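(* Let $\mathcal Q_0=\mathbb Q\cap(0,1)$ and consider the real vector space of finitely supported real functions on $\mathcal Q_0$ with unit vectors $e_q$, $q\in\mathcal Q_0$. Define linear operators $D_2,D_3$ on it by $D_2e_q=e_{q/2}+e_{(q+1)/2}$ and $D_3e_q=e_{q/3}+e_{(q+1)/3}+e_{(q+2)/3}$. Then for all $l,m\in\mathbb N$ the vector $D_2^lD_3^me_{1/6}$ is a sum of $2^l3^m$ pairwise different unit vectors $e_q$, and the supports of $D_2^lD_3^me_{1/6}$ and $D_2^{l_1}D_3^{m_1}e_{1/6}$ are disjoint whenever $(l,m)\ne(l_1,m_1)$. *)

theory Defs
  imports Complex_Main
begin

text \<open>Q0 = rationals in (0,1).  Vectors of the space of finitely supported real
functions on Q0 are represented as functions rat => real (finitely supported, support in Q0).\<close>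

definition Q0 :: "rat set" where
  "Q0 = {q. 0 < q \<and> q < 1}"

definition fsupp :: "(rat \<Rightarrow> real) \<Rightarrow> rat set" where
  "fsupp v = {q. v q \<noteq> 0}"

definition FinSupp :: "(rat \<Rightarrow> real) set" where
  "FinSupp = {v. finite (fsupp v) \<and> fsupp v \<subseteq> Q0}"

definition unitvec :: "rat \<Rightarrow> rat \<Rightarrow> real" where
  "unitvec q = (\<lambda>p. if p = q then 1 else 0)"

definition D2 :: "(rat \<Rightarrow> real) \<Rightarrow> rat \<Rightarrow> real" where
  "D2 v = (\<lambda>p. \<Sum>q\<in>fsupp v. v q * (unitvec (q/2) p + unitvec ((q+1)/2) p))"

definition D3 :: "(rat \<Rightarrow> real) \<Rightarrow> rat \<Rightarrow> real" where
  "D3 v = (\<lambda>p. \<Sum>q\<in>fsupp v. v q *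
     (unitvec (q/3) p + unitvec ((q+1)/3) p + unitvec ((q+2)/3) p))"

end

theory Submission
  imports Defs "HOL-Library.Indicator_Function" "HOL-Computational_Algebra.Primes"
begin

text \<open>
  Both operators are instances of \<open>D_b e_q = \<Sum>k<b. e_((q + k)/b)\<close>. For a finite \<open>S\<close> in \<open>(0,1)\<close>
  the maps \<open>q \<mapsto> (q + k)/b\<close>, \<open>k < b\<close>, send \<open>S\<close> into the disjoint intervals \<open>(k/b, (k+1)/b)\<close>,
  so \<open>D_b\<close> maps the indicator of \<open>S\<close> to the indicator of a set with \<open>b \<cdot> card S\<close> elements.
  Every point of the support of \<open>D_2^l D_3^m e_(1/6)\<close> is \<open>n / (6 \<cdot> 2^l \<cdot> 3^m)\<close> with
  \<open>n \<equiv> 1 (mod 6)\<close>; this fraction is in lowest terms, so the point determines \<open>(l, m)\<close>.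
\<close>

definition Dop :: "nat \<Rightarrow> (rat \<Rightarrow> real) \<Rightarrow> rat \<Rightarrow> real" where
  "Dop b v = (\<lambda>p. \<Sum>q\<in>fsupp v. v q * (\<Sum>k<b. unitvec ((q + of_nat k) / of_nat b) p))"

lemma D2_eq_Dop: "D2 = Dop 2"
  by (simp add: fun_eq_iff D2_def Dop_def numeral_2_eq_2 lessThan_Suc add_ac)

lemma D3_eq_Dop: "D3 = Dop 3"
  by (simp add: fun_eq_iff D3_def Dop_def numeral_3_eq_3 lessThan_Suc add_ac)

definition refine :: "nat \<Rightarrow> rat set \<Rightarrow> rat set" where
  "refine b S = (\<lambda>(k, q). (q + of_nat k) / of_nat b) ` ({..<b} \<times> S)"

lemma inj_on_refine_map:
  assumes "S \<subseteq> Q0"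
  shows "inj_on (\<lambda>(k, q). (q + of_nat k) / of_nat b) ({..<b} \<times> S)"
proof (rule inj_onI, clarify)
  fix k k' :: nat and q q' :: rat
  assume "k < b" "q \<in> S" "q' \<in> S" "(q + of_nat k) / of_nat b = (q' + of_nat k') / of_nat b"
  then have sum_eq: "q + of_nat k = q' + of_nat k'" and "0 \<le> q" "q < 1" "0 \<le> q'" "q' < 1"
    using assms by (auto simp: Q0_def)
  then have "\<lfloor>q\<rfloor> = 0" "\<lfloor>q'\<rfloor> = 0"
    by (simp_all add: floor_eq_iff)
  then have "k = k'"
    using arg_cong[OF sum_eq, of floor] by simp
  then show "k = k' \<and> q = q'"
    using sum_eq by simp
qed

lemma refine_subset_Q0: "S \<subseteq> Q0 \<Longrightarrow> refine b S \<subseteq> Q0"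
proof (clarsimp simp: refine_def)
  fix k q assume "S \<subseteq> Q0" "k < b" "q \<in> S"
  then have "0 < q" "q < 1" "of_nat k + 1 \<le> (of_nat b :: rat)" by (auto simp: Q0_def)
  then show "(q + of_nat k) / of_nat b \<in> Q0"
    by (auto simp: Q0_def field_simps)
qed

lemma finite_refine: "finite S \<Longrightarrow> finite (refine b S)"
  by (simp add: refine_def)

lemma card_refine: "S \<subseteq> Q0 \<Longrightarrow> card (refine b S) = b * card S"
  by (simp add: refine_def card_image inj_on_refine_map card_cartesian_product)

lemma fsupp_indicator: "fsupp (indicator S) = S"
  by (auto simp: fsupp_def indicator_def)

lemma sum_unitvec: "finite S \<Longrightarrow> (\<Sum>q\<in>S. unitvec q p) = indicator S p"
  by (simp add: unitvec_def indicator_def sum.delta')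

lemma Dop_indicator:
  assumes "finite S" "S \<subseteq> Q0"
  shows "Dop b (indicator S) = indicator (refine b S)"
proof
  fix p
  let ?f = "\<lambda>(k, q). (q + of_nat k) / of_nat b"
  have "Dop b (indicator S) p = (\<Sum>q\<in>S. \<Sum>k<b. unitvec (?f (k, q)) p)"
    by (simp add: Dop_def fsupp_indicator)
  also have "\<dots> = (\<Sum>x\<in>{..<b} \<times> S. unitvec (?f x) p)"
    by (subst sum.swap) (simp add: sum.cartesian_product split_def)
  also have "\<dots> = (\<Sum>y\<in>refine b S. unitvec y p)"
    unfolding refine_def using inj_on_refine_map[OF assms(2)] by (simp add: sum.reindex)
  also have "\<dots> = indicator (refine b S) p"
    using assms(1) by (simp add: finite_refine sum_unitvec)
  finally show "Dop b (indicator S) p = indicator (refine b S) p" .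
qed

lemma funpow_refine_subset_Q0: "S \<subseteq> Q0 \<Longrightarrow> (refine b ^^ n) S \<subseteq> Q0"
  by (induction n) (simp_all add: refine_subset_Q0)

lemma finite_funpow_refine: "finite S \<Longrightarrow> finite ((refine b ^^ n) S)"
  by (induction n) (simp_all add: finite_refine)

lemma card_funpow_refine: "S \<subseteq> Q0 \<Longrightarrow> card ((refine b ^^ n) S) = b ^ n * card S"
  by (induction n) (simp_all add: card_refine funpow_refine_subset_Q0)

lemma funpow_Dop_indicator:
  "finite S \<Longrightarrow> S \<subseteq> Q0 \<Longrightarrow> (Dop b ^^ n) (indicator S) = indicator ((refine b ^^ n) S)"
  by (induction n) (simp_all add: Dop_indicator finite_funpow_refine funpow_refine_subset_Q0)

definition refined_points :: "nat \<Rightarrow> nat \<Rightarrow> rat set" where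
  "refined_points l m = (refine 2 ^^ l) ((refine 3 ^^ m) {1/6})"

lemma one_sixth_in_Q0: "1/6 \<in> Q0"
  by (simp add: Q0_def)

lemma refined_points_subset_Q0: "refined_points l m \<subseteq> Q0"
  by (simp add: refined_points_def funpow_refine_subset_Q0 one_sixth_in_Q0)

lemma finite_refined_points: "finite (refined_points l m)"
  by (simp add: refined_points_def finite_funpow_refine)

lemma card_refined_points: "card (refined_points l m) = 2 ^ l * 3 ^ m"
  by (simp add: refined_points_def card_funpow_refine funpow_refine_subset_Q0 one_sixth_in_Q0)

lemma D2_D3_unitvec: "(D2 ^^ l) ((D3 ^^ m) (unitvec (1/6))) = indicator (refined_points l m)"
proof -
  have "unitvec (1/6) = indicator {1/6}"
    by (simp add: fun_eq_iff unitvec_def indicator_def)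
  then show ?thesis
    by (simp add: D2_eq_Dop D3_eq_Dop refined_points_def funpow_Dop_indicator
        finite_funpow_refine funpow_refine_subset_Q0 one_sixth_in_Q0)
qed

definition frac_1_mod_6 :: "int \<Rightarrow> rat \<Rightarrow> bool" where
  "frac_1_mod_6 N p \<longleftrightarrow> (\<exists>n. p * of_int N = of_int n \<and> n mod 6 = 1)"

lemma frac_1_mod_6_refine_step:
  assumes "6 dvd N" "frac_1_mod_6 N q" "0 < b"
  shows "frac_1_mod_6 (N * int b) ((q + of_nat k) / of_nat b)"
proof -
  obtain n where n: "q * of_int N = of_int n" "n mod 6 = 1"
    using assms(2) unfolding frac_1_mod_6_def by blast
  have "(q + of_nat k) / of_nat b * of_int (N * int b) = of_int (n + int k * N)"
    using n(1) assms(3) by (simp add: field_simps)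
  moreover have "(n + int k * N) mod 6 = 1"
  proof -
    obtain c where "N = 6 * c"
      using assms(1) by blast
    then have "n + int k * N = n + int k * c * 6"
      by (simp add: ac_simps)
    then show ?thesis
      using n(2) by (simp only: mod_mult_self1)
  qed
  ultimately show ?thesis
    unfolding frac_1_mod_6_def by (intro exI[of _ "n + int k * N"] conjI)
qed

lemma frac_1_mod_6_funpow_refine:
  assumes "6 dvd N" "\<forall>q\<in>S. frac_1_mod_6 N q" "p \<in> (refine b ^^ n) S"
  shows "frac_1_mod_6 (N * int b ^ n) p"
  using assms(3)
proof (induction n arbitrary: p)
  case 0
  then show ?case using assms(2) by simp
next
  case (Suc n)
  have "p \<in> refine b ((refine b ^^ n) S)"
    using Suc.prems by simp
  then obtain k q where "k < b" and q: "q \<in> (refine b ^^ n) S"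
    and p: "p = (q + of_nat k) / of_nat b"
    unfolding refine_def by auto
  have "6 dvd N * int b ^ n"
    using assms(1) by (rule dvd_mult2)
  moreover have "frac_1_mod_6 (N * int b ^ n) q"
    using q by (rule Suc.IH)
  ultimately have "frac_1_mod_6 (N * int b ^ n * int b) p"
    unfolding p using \<open>k < b\<close> by (intro frac_1_mod_6_refine_step) simp_all
  moreover have "N * int b ^ n * int b = N * int b ^ Suc n"
    by (simp add: ac_simps)
  ultimately show ?case
    by simp
qed

lemma frac_1_mod_6_refined_points:
  assumes "p \<in> refined_points l m"
  shows "frac_1_mod_6 (6 * 2 ^ l * 3 ^ m) p"
proof -
  have "frac_1_mod_6 6 (1/6)"
    unfolding frac_1_mod_6_def by (intro exI[of _ 1]) simp
  then have "\<forall>q\<in>(refine 3 ^^ m) {1/6}. frac_1_mod_6 (6 * 3 ^ m) q"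
    using frac_1_mod_6_funpow_refine[where N = 6 and b = 3 and S = "{1/6}"] by simp
  then have "frac_1_mod_6 (6 * 3 ^ m * 2 ^ l) p"
    using assms frac_1_mod_6_funpow_refine[where N = "6 * 3 ^ m" and b = 2]
    by (simp add: refined_points_def)
  then show ?thesis
    by (simp add: ac_simps)
qed

lemma coprime_1_mod_6:
  fixes n :: int
  assumes "n mod 6 = 1"
  shows "coprime n (6 * 2 ^ l * 3 ^ m)"
proof -
  have "odd n" "\<not> 3 dvd n"
    using assms by presburger+
  then have "coprime n 2" "coprime n 3"
    using prime_imp_coprime[of "3::int" n] by (simp_all add: coprime_commute)
  then show ?thesis
    using coprime_mult_right_iff[of n 2 3] by simp
qed

lemma two_three_powers_eq_iff:
  "(2 ^ l * 3 ^ m :: int) = 2 ^ l' * 3 ^ m' \<longleftrightarrow> l = l' \<and> m = m'"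
proof
  assume eq: "(2 ^ l * 3 ^ m :: int) = 2 ^ l' * 3 ^ m'"
  have mult_2: "multiplicity 2 (2 ^ a * 3 ^ b :: int) = a"
    and mult_3: "multiplicity 3 (2 ^ a * 3 ^ b :: int) = b" for a b
    by (simp_all add: prime_elem_multiplicity_mult_distrib prime_elem_multiplicity_power_distrib
        not_dvd_imp_multiplicity_0)
  show "l = l' \<and> m = m'"
    using mult_2[of l m] mult_2[of l' m'] mult_3[of l m] mult_3[of l' m'] eq by simp
qed simp

lemma frac_1_mod_6_denominator_unique:
  assumes "frac_1_mod_6 (6 * 2 ^ l * 3 ^ m) p" "frac_1_mod_6 (6 * 2 ^ l' * 3 ^ m') p"
  shows "l = l' \<and> m = m'"
proof -
  let ?N = "6 * 2 ^ l * 3 ^ m :: int" and ?N' = "6 * 2 ^ l' * 3 ^ m' :: int"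
  obtain n n' where n: "p * of_int ?N = of_int n" "n mod 6 = 1"
    and n': "p * of_int ?N' = of_int n'" "n' mod 6 = 1"
    using assms unfolding frac_1_mod_6_def by blast
  have "of_int (n * ?N') = (of_int (n' * ?N) :: rat)"
    by (simp flip: n(1) n'(1))
  then have "\<bar>n\<bar> * \<bar>?N'\<bar> = \<bar>n'\<bar> * \<bar>?N\<bar>"
    by (simp only: of_int_eq_iff abs_mult [symmetric])
  then have "?N' = ?N"
    using coprime_crossproduct_int[OF coprime_1_mod_6[OF n(2)] coprime_1_mod_6[OF n'(2)]] by simp
  then show ?thesis
    using two_three_powers_eq_iff by auto
qed

lemma refined_points_disjoint:
  assumes "(l, m) \<noteq> (l', m')"
  shows "refined_points l m \<inter> refined_points l' m' = {}"
  using assms frac_1_mod_6_denominator_unique frac_1_mod_6_refined_points by blast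

theorem lemma3p2:
  shows "(\<forall>l m :: nat. \<exists>S. finite S \<and> S \<subseteq> Q0 \<and> card S = 2 ^ l * 3 ^ m \<and>
            (D2 ^^ l) ((D3 ^^ m) (unitvec (1/6))) = (\<lambda>p. \<Sum>q\<in>S. unitvec q p))
       \<and> (\<forall>l m l1 m1 :: nat. (l, m) \<noteq> (l1, m1) \<longrightarrow>
            fsupp ((D2 ^^ l) ((D3 ^^ m) (unitvec (1/6)))) \<inter>
            fsupp ((D2 ^^ l1) ((D3 ^^ m1) (unitvec (1/6)))) = {})"
proof (intro conjI allI impI)
  fix l m :: nat
  show "\<exists>S. finite S \<and> S \<subseteq> Q0 \<and> card S = 2 ^ l * 3 ^ m \<and>
      (D2 ^^ l) ((D3 ^^ m) (unitvec (1/6))) = (\<lambda>p. \<Sum>q\<in>S. unitvec q p)"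
    by (intro exI[of _ "refined_points l m"])
      (simp add: finite_refined_points refined_points_subset_Q0 card_refined_points
        D2_D3_unitvec sum_unitvec)
next
  fix l m l1 m1 :: nat
  assume "(l, m) \<noteq> (l1, m1)"
  then show "fsupp ((D2 ^^ l) ((D3 ^^ m) (unitvec (1/6)))) \<inter>
      fsupp ((D2 ^^ l1) ((D3 ^^ m1) (unitvec (1/6)))) = {}"
    by (simp add: D2_D3_unitvec fsupp_indicator refined_points_disjoint)
qed

end
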